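(* Let $A$ be a strongly AUF algebra and let $e\in A$ be a generating idempotent. Then the $A$-$(eAe)$ bimodule $Ae$ has a left coordinate system. In particular, $Ae$ is a projective right $eAe$-module.
   Context: All algebras are associative $\mathbb C$-algebras, not necessarily unital. An idempotent is an element $e$ with $e^2=e$. An algebra $A$ is AUF if there is a family $(e_i)_{i\in\mathfrak I}$ of mutually orthogonal idempotents with $\dim e_iAe_j<\infty$ and $A=\sum_{i,j}e_iAe_j$. A left $A$-module $M$ is quasicoherent if $\xi\in A\xi$ for all $\xi\in M$. Irreducible means nonzero with no nonzero proper submodules. An idempotent $e$ is generating if every irreducible quasicoherent left $A$-module is a quotient of $Ae$; $A$ is strongly AUF if it is AUF and has a generating idempotent. The algebra $eAe$ is unital with unit $e$. A left coordinate system of an $A$-$B$ bimodule $M$ ($B$ unital) is a family of right $B$-module maps $\alpha_i:B\to M$, $\check\alpha^i:M\to B$, $i\in I$, such that (a) for each $\xi\in M$, $\check\alpha^i(\xi)=0$ for all but finitely many $i$ and $\sum_i\alpha_i\check\alpha^i(\xi)=\xi$; (b) for each $x\in A$ (acting on $M$), $x\circ\alpha_i=0$ and $\check\alpha^i\circ x=0$ for all but finitely many $i$. *)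

theory Defs
  imports Complex_Main
begin

text \<open>The algebra A is the whole type 'a (class ring: associative, not necessarily
unital), together with a complex scalar multiplication smul making it a
complex algebra.\<close>

definition calg :: "(complex \<Rightarrow> 'a::ring \<Rightarrow> 'a) \<Rightarrow> bool" where
  "calg smul \<longleftrightarrow> vector_space smul \<and>
     (\<forall>c x y. smul c (x * y) = smul c x * y \<and> smul c (x * y) = x * smul c y)"

definition findim :: "(complex \<Rightarrow> 'a::ring \<Rightarrow> 'a) \<Rightarrow> 'a set \<Rightarrow> bool" where
  "findim smul S \<longleftrightarrow> (\<exists>F. finite F \<and> F \<subseteq> S \<and> S \<subseteq> module.span smul F)"

definition corner :: "'a::ring \<Rightarrow> 'a \<Rightarrow> 'a set" where
  "corner e f = {e * x * f | x. True}"

definition lideal :: "'a::ring \<Rightarrow> 'a set" where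
  "lideal e = {x * e | x. True}"

definition AUF :: "(complex \<Rightarrow> 'a::ring \<Rightarrow> 'a) \<Rightarrow> bool" where
  "AUF smul \<longleftrightarrow> (\<exists>E::'a set.
     (\<forall>e\<in>E. e * e = e) \<and>
     (\<forall>e\<in>E. \<forall>f\<in>E. e \<noteq> f \<longrightarrow> e * f = 0) \<and>
     (\<forall>e\<in>E. \<forall>f\<in>E. findim smul (corner e f)) \<and>
     UNIV \<subseteq> module.span smul (\<Union>e\<in>E. \<Union>f\<in>E. corner e f))"

text \<open>Modules given explicitly by carrier and operations. For a left A-module
mact x m is x.m; for a right module mact b m is m.b.\<close>
record ('m, 'a) amod =
  mcarrier :: "'m set"
  madd :: "'m \<Rightarrow> 'm \<Rightarrow> 'm"
  mzero :: "'m"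
  mscal :: "complex \<Rightarrow> 'm \<Rightarrow> 'm"
  mact :: "'a \<Rightarrow> 'm \<Rightarrow> 'm"

definition cvs :: "('m, 'a) amod \<Rightarrow> bool" where
  "cvs M \<longleftrightarrow> (let C = mcarrier M; ad = madd M; z = mzero M; sc = mscal M in
     z \<in> C \<and>
     (\<forall>u\<in>C. \<forall>v\<in>C. ad u v \<in> C) \<and>
     (\<forall>c. \<forall>u\<in>C. sc c u \<in> C) \<and>
     (\<forall>u\<in>C. \<forall>v\<in>C. \<forall>w\<in>C. ad (ad u v) w = ad u (ad v w)) \<and>
     (\<forall>u\<in>C. \<forall>v\<in>C. ad u v = ad v u) \<and>
     (\<forall>u\<in>C. ad z u = u) \<and>
     (\<forall>u\<in>C. \<exists>v\<in>C. ad u v = z) \<and>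
     (\<forall>c. \<forall>u\<in>C. \<forall>v\<in>C. sc c (ad u v) = ad (sc c u) (sc c v)) \<and>
     (\<forall>c d. \<forall>u\<in>C. sc (c + d) u = ad (sc c u) (sc d u)) \<and>
     (\<forall>c d. \<forall>u\<in>C. sc c (sc d u) = sc (c * d) u) \<and>
     (\<forall>u\<in>C. sc 1 u = u))"

definition lmod :: "(complex \<Rightarrow> 'a::ring \<Rightarrow> 'a) \<Rightarrow> ('m, 'a) amod \<Rightarrow> bool" where
  "lmod smul M \<longleftrightarrow> cvs M \<and>
     (let C = mcarrier M; ad = madd M; sc = mscal M; act = mact M in
     (\<forall>x. \<forall>u\<in>C. act x u \<in> C) \<and>
     (\<forall>x. \<forall>u\<in>C. \<forall>v\<in>C. act x (ad u v) = ad (act x u) (act x v)) \<and>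
     (\<forall>x y. \<forall>u\<in>C. act (x + y) u = ad (act x u) (act y u)) \<and>
     (\<forall>c x. \<forall>u\<in>C. act (smul c x) u = sc c (act x u)) \<and>
     (\<forall>c x. \<forall>u\<in>C. act x (sc c u) = sc c (act x u)) \<and>
     (\<forall>x y. \<forall>u\<in>C. act (x * y) u = act x (act y u)))"

definition quasicoherent :: "('m, 'a) amod \<Rightarrow> bool" where
  "quasicoherent M \<longleftrightarrow> (\<forall>u\<in>mcarrier M. \<exists>x. mact M x u = u)"

definition lsubmod :: "('m, 'a) amod \<Rightarrow> 'm set \<Rightarrow> bool" where
  "lsubmod M N \<longleftrightarrow> N \<subseteq> mcarrier M \<and> mzero M \<in> N \<and>
     (\<forall>u\<in>N. \<forall>v\<in>N. madd M u v \<in> N) \<and>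
     (\<forall>c. \<forall>u\<in>N. mscal M c u \<in> N) \<and>
     (\<forall>x. \<forall>u\<in>N. mact M x u \<in> N)"

definition irreducible_mod :: "('m, 'a) amod \<Rightarrow> bool" where
  "irreducible_mod M \<longleftrightarrow> mcarrier M \<noteq> {mzero M} \<and>
     (\<forall>N. lsubmod M N \<longrightarrow> N = {mzero M} \<or> N = mcarrier M)"

definition lhom_from_Ae :: "(complex \<Rightarrow> 'a::ring \<Rightarrow> 'a) \<Rightarrow> 'a \<Rightarrow> ('m, 'a) amod \<Rightarrow> ('a \<Rightarrow> 'm) \<Rightarrow> bool" where
  "lhom_from_Ae smul e M f \<longleftrightarrow>
     (\<forall>u\<in>lideal e. f u \<in> mcarrier M) \<and>
     (\<forall>u\<in>lideal e. \<forall>v\<in>lideal e. f (u + v) = madd M (f u) (f v)) \<and>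
     (\<forall>c. \<forall>u\<in>lideal e. f (smul c u) = mscal M c (f u)) \<and>
     (\<forall>x. \<forall>u\<in>lideal e. f (x * u) = mact M x (f u))"

text \<open>Modules are taken with carrier in type 'a set; every
irreducible quasicoherent module is isomorphic to one of these (a quotient A/L
with cosets as elements), and being a quotient of A e is isomorphism invariant.\<close>
definition generating :: "(complex \<Rightarrow> 'a::ring \<Rightarrow> 'a) \<Rightarrow> 'a \<Rightarrow> bool" where
  "generating smul e \<longleftrightarrow> e * e = e \<and>
     (\<forall>M :: ('a set, 'a) amod. lmod smul M \<and> quasicoherent M \<and> irreducible_mod M \<longrightarrow>
        (\<exists>f. lhom_from_Ae smul e M f \<and> f ` lideal e = mcarrier M))"

definition strongly_AUF :: "(complex \<Rightarrow> 'a::ring \<Rightarrow> 'a) \<Rightarrow> bool" where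
  "strongly_AUF smul \<longleftrightarrow> AUF smul \<and> (\<exists>e. generating smul e)"

definition rmap :: "(complex \<Rightarrow> 'a::ring \<Rightarrow> 'a) \<Rightarrow> 'a \<Rightarrow> 'a set \<Rightarrow> 'a set \<Rightarrow> ('a \<Rightarrow> 'a) \<Rightarrow> bool" where
  "rmap smul e S T f \<longleftrightarrow>
     (\<forall>u\<in>S. f u \<in> T) \<and>
     (\<forall>u\<in>S. \<forall>v\<in>S. f (u + v) = f u + f v) \<and>
     (\<forall>c. \<forall>u\<in>S. f (smul c u) = smul c (f u)) \<and>
     (\<forall>u\<in>S. \<forall>b\<in>corner e e. f (u * b) = f u * b)"

definition left_coord_system ::
  "(complex \<Rightarrow> 'a::ring \<Rightarrow> 'a) \<Rightarrow> 'a \<Rightarrow> 'i set \<Rightarrow> ('i \<Rightarrow> 'a \<Rightarrow> 'a) \<Rightarrow> ('i \<Rightarrow> 'a \<Rightarrow> 'a) \<Rightarrow> bool" where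
  "left_coord_system smul e I \<alpha> \<alpha>c \<longleftrightarrow>
     (\<forall>i\<in>I. rmap smul e (corner e e) (lideal e) (\<alpha> i)) \<and>
     (\<forall>i\<in>I. rmap smul e (lideal e) (corner e e) (\<alpha>c i)) \<and>
     (\<forall>\<xi>\<in>lideal e. finite {i\<in>I. \<alpha>c i \<xi> \<noteq> 0} \<and>
        (\<Sum>i\<in>{i\<in>I. \<alpha>c i \<xi> \<noteq> 0}. \<alpha> i (\<alpha>c i \<xi>)) = \<xi>) \<and>
     (\<forall>x. finite {i\<in>I. \<exists>b\<in>corner e e. x * \<alpha> i b \<noteq> 0} \<and>
          finite {i\<in>I. \<exists>\<xi>\<in>lideal e. \<alpha>c i (x * \<xi>) \<noteq> 0})"

text \<open>Right eAe-modules (unital, e acts as identity); mact b m means m.b.\<close>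
definition rmod :: "(complex \<Rightarrow> 'a::ring \<Rightarrow> 'a) \<Rightarrow> 'a \<Rightarrow> ('m, 'a) amod \<Rightarrow> bool" where
  "rmod smul e M \<longleftrightarrow> cvs M \<and>
     (let C = mcarrier M; ad = madd M; sc = mscal M; act = mact M; B = corner e e in
     (\<forall>b\<in>B. \<forall>u\<in>C. act b u \<in> C) \<and>
     (\<forall>b\<in>B. \<forall>u\<in>C. \<forall>v\<in>C. act b (ad u v) = ad (act b u) (act b v)) \<and>
     (\<forall>b\<in>B. \<forall>b'\<in>B. \<forall>u\<in>C. act (b + b') u = ad (act b u) (act b' u)) \<and>
     (\<forall>c. \<forall>b\<in>B. \<forall>u\<in>C. act (smul c b) u = sc c (act b u)) \<and>
     (\<forall>c. \<forall>b\<in>B. \<forall>u\<in>C. act b (sc c u) = sc c (act b u)) \<and>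
     (\<forall>b\<in>B. \<forall>b'\<in>B. \<forall>u\<in>C. act (b * b') u = act b' (act b u)) \<and>
     (\<forall>u\<in>C. act e u = u))"

definition rhom :: "(complex \<Rightarrow> 'a::ring \<Rightarrow> 'a) \<Rightarrow> 'a \<Rightarrow> ('m, 'a) amod \<Rightarrow> ('n, 'a) amod \<Rightarrow> ('m \<Rightarrow> 'n) \<Rightarrow> bool" where
  "rhom smul e M N f \<longleftrightarrow>
     (\<forall>u\<in>mcarrier M. f u \<in> mcarrier N) \<and>
     (\<forall>u\<in>mcarrier M. \<forall>v\<in>mcarrier M. f (madd M u v) = madd N (f u) (f v)) \<and>
     (\<forall>c. \<forall>u\<in>mcarrier M. f (mscal M c u) = mscal N c (f u)) \<and>
     (\<forall>b\<in>corner e e. \<forall>u\<in>mcarrier M. f (mact M b u) = mact N b (f u))"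

definition Ae_right :: "(complex \<Rightarrow> 'a::ring \<Rightarrow> 'a) \<Rightarrow> 'a \<Rightarrow> ('a, 'a) amod" where
  "Ae_right smul e = \<lparr>mcarrier = lideal e, madd = (+), mzero = 0, mscal = smul,
                      mact = (\<lambda>b u. u * b)\<rparr>"

definition right_projective_wrt ::
  "(complex \<Rightarrow> 'a::ring \<Rightarrow> 'a) \<Rightarrow> 'a \<Rightarrow> ('m, 'a) amod \<Rightarrow> ('n, 'a) amod \<Rightarrow> ('p, 'a) amod \<Rightarrow> bool" where
  "right_projective_wrt smul e M N P \<longleftrightarrow>
     (\<forall>g f. rmod smul e N \<and> rmod smul e P \<and> rhom smul e N P g \<and> g ` mcarrier N = mcarrier P \<and>
        rhom smul e M P f \<longrightarrow>
        (\<exists>h. rhom smul e M N h \<and> (\<forall>u\<in>mcarrier M. g (h u) = f u)))"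

end

theory Submission
  imports Defs "HOL-Algebra.FiniteProduct"
begin

(*
  Let A be spanned by the corners e_i A e_j of a family of orthogonal idempotents e_i. Then every
  element x is supported on finitely many e_i, from either side, and x is the sum of the e_i x; in
  particular A has local units. Since e is generating, every e_i lies in the span of A e A e_i:
  otherwise Zorn's lemma gives a maximal submodule N of A e_i that contains A e A e_i but not e_i,
  and the simple quasicoherent module A e_i / N is not a quotient of A e, because a map out of A e
  is determined by the image of e = e e, which lies in e (A e_i / N) = 0.

  Multiplying by e_i, we get e_i = sum_s c_s (e_i x_s e) (e y_s e_i), and the maps
  b |-> c_s e_i x_s e b and xi |-> e y_s e_i xi form a left coordinate system of A e: their
  composites sum to sum_i e_i xi = xi, with finitely many nonzero terms by the support property.
  A coordinate system makes A e projective over eAe: a map f from A e is lifted through a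
  surjection N -> P by lifting the images f (alpha_s e) of the generators and recombining them
  with the coordinates alpha^s.
*)

section \<open>Abstract modules and finite sums\<close>

definition additive_group :: "('m, 'b) amod \<Rightarrow> 'm monoid" where
  "additive_group M = \<lparr>carrier = mcarrier M, mult = madd M, one = mzero M\<rparr>"

lemma additive_group_simps [simp]:
  "carrier (additive_group M) = mcarrier M"
  "mult (additive_group M) = madd M"
  "one (additive_group M) = mzero M"
  by (simp_all add: additive_group_def)

lemma comm_group_additive_group:
  assumes "cvs M"
  shows "comm_group (additive_group M)"
proof -
  have inv: "\<exists>v\<in>mcarrier M. madd M v u = mzero M" if "u \<in> mcarrier M" for u
    using assms that unfolding cvs_def Let_def by metis
  show ?thesis
    by (rule comm_groupI) (use assms inv in \<open>auto simp: cvs_def Let_def\<close>)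
qed

lemma finprod_hom:
  assumes "comm_group G" "comm_group H" and h: "h \<in> hom G H" and f: "f \<in> A \<rightarrow> carrier G"
  shows "h (finprod G f A) = finprod H (\<lambda>i. h (f i)) A"
proof -
  interpret G: comm_group G by fact
  interpret H: comm_group H by fact
  have h_one: "h \<one>\<^bsub>G\<^esub> = \<one>\<^bsub>H\<^esub>"
    using hom_one[OF h] G.group_axioms H.group_axioms .
  show ?thesis
    using f
  proof (induction A rule: infinite_finite_induct)
    case (insert i A)
    have "(\<lambda>i. h (f i)) \<in> A \<rightarrow> carrier H" "h (f i) \<in> carrier H"
      using insert.prems hom_in_carrier[OF h] by auto
    then show ?case
      using insert hom_mult[OF h] by (auto simp: Pi_iff)
  qed (simp_all add: h_one)
qed

lemma cvs_scale_closed: "cvs M \<Longrightarrow> u \<in> mcarrier M \<Longrightarrow> mscal M c u \<in> mcarrier M"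
  unfolding cvs_def Let_def by auto

lemma cvs_scale_hom:
  "cvs M \<Longrightarrow> mscal M c \<in> hom (additive_group M) (additive_group M)"
  unfolding cvs_def Let_def by (auto intro: homI)

lemma rhom_hom:
  "rhom smul e M N f \<Longrightarrow> f \<in> hom (additive_group M) (additive_group N)"
  unfolding rhom_def by (auto intro: homI)

lemma rmod_cvs: "rmod smul e N \<Longrightarrow> cvs N"
  unfolding rmod_def by simp

lemma rmod_act_hom:
  "rmod smul e N \<Longrightarrow> b \<in> corner e e \<Longrightarrow> mact N b \<in> hom (additive_group N) (additive_group N)"
  unfolding rmod_def Let_def by (auto intro: homI)

lemma rmod_act_closed:
  "rmod smul e N \<Longrightarrow> b \<in> corner e e \<Longrightarrow> u \<in> mcarrier N \<Longrightarrow> mact N b u \<in> mcarrier N"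
  unfolding rmod_def Let_def by auto

lemma rmod_act_add:
  "rmod smul e N \<Longrightarrow> b \<in> corner e e \<Longrightarrow> b' \<in> corner e e \<Longrightarrow> u \<in> mcarrier N \<Longrightarrow>
    mact N (b + b') u = madd N (mact N b u) (mact N b' u)"
  unfolding rmod_def Let_def by auto

lemma rmod_act_scale:
  "rmod smul e N \<Longrightarrow> b \<in> corner e e \<Longrightarrow> u \<in> mcarrier N \<Longrightarrow>
    mact N (smul c b) u = mscal N c (mact N b u)"
  unfolding rmod_def Let_def by auto

lemma rmod_act_mult:
  "rmod smul e N \<Longrightarrow> b \<in> corner e e \<Longrightarrow> b' \<in> corner e e \<Longrightarrow> u \<in> mcarrier N \<Longrightarrow>
    mact N (b * b') u = mact N b' (mact N b u)"
  unfolding rmod_def Let_def by auto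

lemma zero_in_corner [simp]: "0 \<in> corner e f"
  unfolding corner_def by (auto intro: exI[of _ 0])

lemma rmod_act_zero:
  assumes N: "rmod smul e N" and u: "u \<in> mcarrier N"
  shows "mact N 0 u = mzero N"
proof -
  interpret comm_group "additive_group N"
    using comm_group_additive_group[OF rmod_cvs[OF N]] .
  have "madd N (mact N 0 u) (mact N 0 u) = mact N 0 u"
    using rmod_act_add[OF N zero_in_corner zero_in_corner u] by simp
  then show ?thesis
    using r_cancel_one rmod_act_closed[OF N zero_in_corner u] by simp
qed


section \<open>Complex algebras\<close>

lemma idempotent_absorb: "e * e = e \<Longrightarrow> e * (e * x) = e * (x::'a::semigroup_mult)"
  by (simp flip: mult.assoc)

locale complex_algebra =
  fixes smul :: "complex \<Rightarrow> 'a::ring \<Rightarrow> 'a"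
  assumes calg: "calg smul"
begin

sublocale vs: vector_space smul
  using calg unfolding calg_def by auto

lemma scale_mult_left: "smul c x * y = smul c (x * y)"
  using calg unfolding calg_def by auto

lemma mult_scale_right: "x * smul c y = smul c (x * y)"
  using calg unfolding calg_def by metis

lemma lideal_zero [simp]: "0 \<in> lideal f"
  unfolding lideal_def by (auto intro: exI[of _ 0])

lemma lideal_add [simp]: "u \<in> lideal f \<Longrightarrow> v \<in> lideal f \<Longrightarrow> u + v \<in> lideal f"
  unfolding lideal_def by (auto simp flip: distrib_right)

lemma lideal_scale [simp]: "u \<in> lideal f \<Longrightarrow> smul c u \<in> lideal f"
  unfolding lideal_def by (auto simp flip: scale_mult_left)

lemma lideal_mult [simp]: "u \<in> lideal f \<Longrightarrow> a * u \<in> lideal f"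
  unfolding lideal_def by (auto simp flip: mult.assoc)

lemma lideal_uminus [simp]: "u \<in> lideal f \<Longrightarrow> - u \<in> lideal f"
  unfolding lideal_def by (auto intro: exI[of _ "- _"])

lemma subspace_lideal: "vs.subspace (lideal f)"
  by (simp add: vs.subspace_def)

lemma mult_span_subset:
  assumes "\<And>s. s \<in> S \<Longrightarrow> a * s \<in> T" and "x \<in> vs.span S"
  shows "a * x \<in> vs.span T"
  using assms(2)
proof (induction rule: vs.span_induct)
  case base
  show ?case
    unfolding vs.subspace_def
    by (auto simp: distrib_left mult_scale_right vs.span_zero vs.span_add vs.span_scale)
next
  case (step s)
  then show ?case
    using assms(1) vs.span_base by auto
qed

lemma idempotent_in_lideal: "f * f = f \<Longrightarrow> f \<in> lideal f"
  unfolding lideal_def by (auto intro: exI[of _ f])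

lemma mult_corner_in_lideal:
  assumes "b \<in> corner e e"
  shows "u * b \<in> lideal e"
proof -
  obtain x where "b = e * x * e"
    using assms unfolding corner_def by auto
  then have "u * b = (u * e * x) * e"
    by (simp add: mult.assoc)
  then show ?thesis
    unfolding lideal_def by blast
qed

lemma rmap_scaled_left_mult: "rmap smul e (corner e e) (lideal e) (\<lambda>b. smul c (u * b))"
  unfolding rmap_def
  by (auto simp: mult_corner_in_lideal distrib_left mult_scale_right scale_mult_left
      vs.scale_right_distrib mult.assoc mult.commute)

lemma idempotent_in_corner: "e * e = e \<Longrightarrow> e \<in> corner e e"
  unfolding corner_def by (auto intro: exI[of _ e])

lemma idempotent_mult_corner:
  assumes "e * e = e" "b \<in> corner e e"
  shows "e * b = b"
proof -
  obtain x where "b = e * x * e"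
    using assms(2) unfolding corner_def by auto
  then show ?thesis
    using assms(1) by (metis mult.assoc)
qed

lemma cvs_Ae_right: "cvs (Ae_right smul e)"
  unfolding cvs_def Let_def Ae_right_def
  by (auto simp: algebra_simps intro!: bexI[of _ "- _"])

lemma Ae_right_simps [simp]:
  "mcarrier (Ae_right smul e) = lideal e"
  "madd (Ae_right smul e) = (+)"
  "mzero (Ae_right smul e) = 0"
  "mscal (Ae_right smul e) = smul"
  "mact (Ae_right smul e) b u = u * b"
  by (simp_all add: Ae_right_def)

lemma finprod_Ae_right:
  assumes "g \<in> A \<rightarrow> lideal e"
  shows "finprod (additive_group (Ae_right smul e)) g A = sum g A"
proof -
  interpret comm_group "additive_group (Ae_right smul e)"
    using comm_group_additive_group[OF cvs_Ae_right] .
  show ?thesis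
    using assms
  proof (induction A rule: infinite_finite_induct)
    case (insert i A)
    then show ?case
      using finprod_insert[of A i g] by simp
  qed simp_all
qed

end


section \<open>Projectivity from a left coordinate system\<close>

definition coord_combination ::
  "('m, 'a::ring) amod \<Rightarrow> 'i set \<Rightarrow> ('i \<Rightarrow> 'a \<Rightarrow> 'a) \<Rightarrow> ('i \<Rightarrow> 'm) \<Rightarrow> 'a \<Rightarrow> 'm" where
  "coord_combination N I \<alpha>c n \<xi> =
     finprod (additive_group N) (\<lambda>i. mact N (\<alpha>c i \<xi>) (n i)) {i\<in>I. \<alpha>c i \<xi> \<noteq> 0}"

locale left_coordinates = complex_algebra smul for smul :: "complex \<Rightarrow> 'a::ring \<Rightarrow> 'a" +
  fixes e :: 'a and I :: "'i set" and \<alpha> \<alpha>c :: "'i \<Rightarrow> 'a \<Rightarrow> 'a"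
  assumes idem: "e * e = e"
    and coords: "left_coord_system smul e I \<alpha> \<alpha>c"
begin

lemma coord_in_corner: "i \<in> I \<Longrightarrow> \<xi> \<in> lideal e \<Longrightarrow> \<alpha>c i \<xi> \<in> corner e e"
  using coords unfolding left_coord_system_def rmap_def by blast

lemma coord_add:
  "i \<in> I \<Longrightarrow> u \<in> lideal e \<Longrightarrow> v \<in> lideal e \<Longrightarrow> \<alpha>c i (u + v) = \<alpha>c i u + \<alpha>c i v"
  using coords unfolding left_coord_system_def rmap_def by blast

lemma coord_scale: "i \<in> I \<Longrightarrow> u \<in> lideal e \<Longrightarrow> \<alpha>c i (smul c u) = smul c (\<alpha>c i u)"
  using coords unfolding left_coord_system_def rmap_def by blast

lemma coord_mult:
  "i \<in> I \<Longrightarrow> u \<in> lideal e \<Longrightarrow> b \<in> corner e e \<Longrightarrow> \<alpha>c i (u * b) = \<alpha>c i u * b"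
  using coords unfolding left_coord_system_def rmap_def by blast

lemma basis_in_lideal: "i \<in> I \<Longrightarrow> b \<in> corner e e \<Longrightarrow> \<alpha> i b \<in> lideal e"
  using coords unfolding left_coord_system_def rmap_def by blast

lemma basis_mult:
  "i \<in> I \<Longrightarrow> b \<in> corner e e \<Longrightarrow> b' \<in> corner e e \<Longrightarrow> \<alpha> i (b * b') = \<alpha> i b * b'"
  using coords unfolding left_coord_system_def rmap_def by blast

lemma finite_coord_support: "\<xi> \<in> lideal e \<Longrightarrow> finite {i\<in>I. \<alpha>c i \<xi> \<noteq> 0}"
  using coords unfolding left_coord_system_def by blast

lemma coord_expansion:
  "\<xi> \<in> lideal e \<Longrightarrow> (\<Sum>i\<in>{i\<in>I. \<alpha>c i \<xi> \<noteq> 0}. \<alpha> i (\<alpha>c i \<xi>)) = \<xi>"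
  using coords unfolding left_coord_system_def by blast

context
  fixes N :: "('m, 'a) amod" and n :: "'i \<Rightarrow> 'm"
  assumes N: "rmod smul e N" and n: "n \<in> I \<rightarrow> mcarrier N"
begin

interpretation N: comm_group "additive_group N"
  using comm_group_additive_group[OF rmod_cvs[OF N]] .

lemma coord_summand_closed:
  "i \<in> I \<Longrightarrow> \<xi> \<in> lideal e \<Longrightarrow> mact N (\<alpha>c i \<xi>) (n i) \<in> mcarrier N"
  using n by (auto simp: Pi_iff intro!: rmod_act_closed[OF N] coord_in_corner)

lemma coord_combination_superset:
  assumes "\<xi> \<in> lideal e" and U: "finite U" "{i\<in>I. \<alpha>c i \<xi> \<noteq> 0} \<subseteq> U" "U \<subseteq> I"
  shows "coord_combination N I \<alpha>c n \<xi> = finprod (additive_group N) (\<lambda>i. mact N (\<alpha>c i \<xi>) (n i)) U"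
  unfolding coord_combination_def
proof (rule N.finprod_mono_neutral_cong_left[OF U(1,2)])
  show "mact N (\<alpha>c i \<xi>) (n i) = \<one>\<^bsub>additive_group N\<^esub>"
    if "i \<in> U - {i\<in>I. \<alpha>c i \<xi> \<noteq> 0}" for i
    using that U(3) n rmod_act_zero[OF N] by (auto simp: Pi_iff)
  show "(\<lambda>i. mact N (\<alpha>c i \<xi>) (n i)) \<in> U \<rightarrow> carrier (additive_group N)"
    using U(3) assms(1) coord_summand_closed by auto
qed simp

lemma coord_combination_over_supports:
  assumes "finite Z" "Z \<subseteq> lideal e" "\<xi> \<in> Z"
  shows "coord_combination N I \<alpha>c n \<xi> =
    finprod (additive_group N) (\<lambda>i. mact N (\<alpha>c i \<xi>) (n i)) (\<Union>\<zeta>\<in>Z. {i\<in>I. \<alpha>c i \<zeta> \<noteq> 0})"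
  using assms finite_coord_support by (intro coord_combination_superset) auto

lemma coord_combination_closed: "\<xi> \<in> lideal e \<Longrightarrow> coord_combination N I \<alpha>c n \<xi> \<in> mcarrier N"
  unfolding coord_combination_def using coord_summand_closed
  by (intro N.finprod_closed[simplified]) auto

lemma coord_combination_add:
  assumes uv: "u \<in> lideal e" "v \<in> lideal e"
  shows "coord_combination N I \<alpha>c n (u + v) =
    madd N (coord_combination N I \<alpha>c n u) (coord_combination N I \<alpha>c n v)"
proof -
  let ?U = "\<Union>\<zeta>\<in>{u, v, u + v}. {i\<in>I. \<alpha>c i \<zeta> \<noteq> 0}"
  let ?t = "\<lambda>\<xi> i. mact N (\<alpha>c i \<xi>) (n i)"
  have "coord_combination N I \<alpha>c n (u + v) = finprod (additive_group N) (?t (u + v)) ?U"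
    using uv by (intro coord_combination_over_supports) auto
  also have "\<dots> = finprod (additive_group N) (\<lambda>i. madd N (?t u i) (?t v i)) ?U"
    using uv coord_summand_closed n
    by (intro N.finprod_cong')
      (auto simp: coord_add rmod_act_add[OF N] coord_in_corner Pi_iff intro: N.m_closed[simplified])
  also have "\<dots> = madd N (finprod (additive_group N) (?t u) ?U) (finprod (additive_group N) (?t v) ?U)"
    using uv coord_summand_closed by (intro N.finprod_multf[simplified]) auto
  finally show ?thesis
    using uv coord_combination_over_supports[of "{u, v, u + v}"] by auto
qed

lemma coord_combination_scale:
  assumes u: "u \<in> lideal e"
  shows "coord_combination N I \<alpha>c n (smul c u) = mscal N c (coord_combination N I \<alpha>c n u)"
proof -
  let ?U = "\<Union>\<zeta>\<in>{u, smul c u}. {i\<in>I. \<alpha>c i \<zeta> \<noteq> 0}"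
  let ?t = "\<lambda>\<xi> i. mact N (\<alpha>c i \<xi>) (n i)"
  have "coord_combination N I \<alpha>c n (smul c u) = finprod (additive_group N) (?t (smul c u)) ?U"
    using u by (intro coord_combination_over_supports) auto
  also have "\<dots> = finprod (additive_group N) (\<lambda>i. mscal N c (?t u i)) ?U"
    using u coord_summand_closed n
    by (intro N.finprod_cong')
      (auto simp: coord_scale rmod_act_scale[OF N] coord_in_corner Pi_iff
        intro: cvs_scale_closed[OF rmod_cvs[OF N]])
  also have "\<dots> = mscal N c (finprod (additive_group N) (?t u) ?U)"
    using u coord_summand_closed
    by (intro finprod_hom[symmetric] N.comm_group_axioms cvs_scale_hom rmod_cvs[OF N]) auto
  finally show ?thesis
    using u coord_combination_over_supports[of "{u, smul c u}"] by auto
qed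

lemma coord_combination_mult:
  assumes u: "u \<in> lideal e" and b: "b \<in> corner e e"
  shows "coord_combination N I \<alpha>c n (u * b) = mact N b (coord_combination N I \<alpha>c n u)"
proof -
  have ub: "u * b \<in> lideal e"
    using b by (rule mult_corner_in_lideal)
  let ?U = "\<Union>\<zeta>\<in>{u, u * b}. {i\<in>I. \<alpha>c i \<zeta> \<noteq> 0}"
  let ?t = "\<lambda>\<xi> i. mact N (\<alpha>c i \<xi>) (n i)"
  have "coord_combination N I \<alpha>c n (u * b) = finprod (additive_group N) (?t (u * b)) ?U"
    using u ub by (intro coord_combination_over_supports) auto
  also have "\<dots> = finprod (additive_group N) (\<lambda>i. mact N b (?t u i)) ?U"
    using u ub b coord_summand_closed n
    by (intro N.finprod_cong')
      (auto simp: coord_mult rmod_act_mult[OF N] coord_in_corner rmod_act_closed[OF N] Pi_iff)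
  also have "\<dots> = mact N b (finprod (additive_group N) (?t u) ?U)"
    using u b coord_summand_closed
    by (intro finprod_hom[symmetric] N.comm_group_axioms rmod_act_hom[OF N]) auto
  finally show ?thesis
    using u ub coord_combination_over_supports[of "{u, u * b}"] by auto
qed

lemma coord_combination_rhom: "rhom smul e (Ae_right smul e) N (coord_combination N I \<alpha>c n)"
  unfolding rhom_def
  using coord_combination_closed coord_combination_add coord_combination_scale coord_combination_mult
  by simp

end

lemma coord_combination_natural:
  assumes N: "rmod smul e N" and P: "rmod smul e P" and g: "rhom smul e N P g"
    and n: "n \<in> I \<rightarrow> mcarrier N" and n': "\<forall>i\<in>I. g (n i) = n' i" and \<xi>: "\<xi> \<in> lideal e"
  shows "g (coord_combination N I \<alpha>c n \<xi>) = coord_combination P I \<alpha>c n' \<xi>"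
proof -
  interpret P: comm_group "additive_group P"
    using comm_group_additive_group[OF rmod_cvs[OF P]] .
  have act_closed: "mact N (\<alpha>c i \<xi>) (n i) \<in> mcarrier N" if "i \<in> I" for i
    using that n \<xi> rmod_act_closed[OF N coord_in_corner] by auto
  have "g (coord_combination N I \<alpha>c n \<xi>) =
      finprod (additive_group P) (\<lambda>i. g (mact N (\<alpha>c i \<xi>) (n i))) {i\<in>I. \<alpha>c i \<xi> \<noteq> 0}"
    unfolding coord_combination_def
    using act_closed comm_group_additive_group[OF rmod_cvs[OF N]] P.comm_group_axioms
    by (intro finprod_hom rhom_hom[OF g]) auto
  also have "\<dots> = coord_combination P I \<alpha>c n' \<xi>"
    unfolding coord_combination_def
  proof (intro P.finprod_cong')
    fix i assume "i \<in> {i\<in>I. \<alpha>c i \<xi> \<noteq> 0}"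
    then show "g (mact N (\<alpha>c i \<xi>) (n i)) = mact P (\<alpha>c i \<xi>) (n' i)"
      using g n n' \<xi> coord_in_corner unfolding rhom_def by (auto simp: Pi_iff)
  next
    show "(\<lambda>i. mact P (\<alpha>c i \<xi>) (n' i)) \<in> {i\<in>I. \<alpha>c i \<xi> \<noteq> 0} \<rightarrow> carrier (additive_group P)"
      using g n n' \<xi> rmod_act_closed[OF P coord_in_corner] unfolding rhom_def
      by (auto simp: Pi_iff simp flip: n')
  qed simp
  finally show ?thesis .
qed

lemma coord_combination_generators:
  assumes P: "rmod smul e P" and f: "rhom smul e (Ae_right smul e) P f" and \<xi>: "\<xi> \<in> lideal e"
  shows "coord_combination P I \<alpha>c (\<lambda>i. f (\<alpha> i e)) \<xi> = f \<xi>"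
proof -
  interpret P: comm_group "additive_group P"
    using comm_group_additive_group[OF rmod_cvs[OF P]] .
  let ?supp = "{i\<in>I. \<alpha>c i \<xi> \<noteq> 0}"
  have summand: "mact P (\<alpha>c i \<xi>) (f (\<alpha> i e)) = f (\<alpha> i (\<alpha>c i \<xi>))" if "i \<in> I" for i
  proof -
    have "mact P (\<alpha>c i \<xi>) (f (\<alpha> i e)) = f (\<alpha> i e * \<alpha>c i \<xi>)"
      using f that \<xi> coord_in_corner basis_in_lideal idempotent_in_corner[OF idem]
      unfolding rhom_def by simp
    also have "\<alpha> i e * \<alpha>c i \<xi> = \<alpha> i (\<alpha>c i \<xi>)"
      using basis_mult[OF that idempotent_in_corner[OF idem] coord_in_corner[OF that \<xi>]]
        idempotent_mult_corner[OF idem coord_in_corner[OF that \<xi>]] by simp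
    finally show ?thesis .
  qed
  have "coord_combination P I \<alpha>c (\<lambda>i. f (\<alpha> i e)) \<xi> =
      finprod (additive_group P) (\<lambda>i. f (\<alpha> i (\<alpha>c i \<xi>))) ?supp"
    unfolding coord_combination_def
    using summand f basis_in_lideal coord_in_corner \<xi> unfolding rhom_def
    by (intro P.finprod_cong') auto
  also have "\<dots> = f (finprod (additive_group (Ae_right smul e)) (\<lambda>i. \<alpha> i (\<alpha>c i \<xi>)) ?supp)"
    using basis_in_lideal coord_in_corner \<xi> comm_group_additive_group[OF cvs_Ae_right]
      P.comm_group_axioms
    by (intro finprod_hom[symmetric] rhom_hom[OF f]) auto
  also have "\<dots> = f \<xi>"
    using basis_in_lideal coord_in_corner \<xi> by (simp add: finprod_Ae_right coord_expansion)
  finally show ?thesis .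
qed

lemma right_projective:
  "right_projective_wrt smul e (Ae_right smul e) N P"
  unfolding right_projective_wrt_def
proof (intro allI impI, elim conjE)
  fix g f
  assume N: "rmod smul e N" and P: "rmod smul e P" and g: "rhom smul e N P g"
    and g_onto: "g ` mcarrier N = mcarrier P" and f: "rhom smul e (Ae_right smul e) P f"
  have "\<forall>i\<in>I. \<exists>m\<in>mcarrier N. g m = f (\<alpha> i e)"
    using g_onto f basis_in_lideal idempotent_in_corner[OF idem] unfolding rhom_def
    by (metis Ae_right_simps(1) imageE)
  then obtain n where n: "n \<in> I \<rightarrow> mcarrier N" and lift: "\<forall>i\<in>I. g (n i) = f (\<alpha> i e)"
    by (metis Pi_I)
  have "g (coord_combination N I \<alpha>c n \<xi>) = f \<xi>" if "\<xi> \<in> lideal e" for \<xi>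
    using coord_combination_natural[OF N P g n lift that] coord_combination_generators[OF P f that]
    by simp
  then show "\<exists>h. rhom smul e (Ae_right smul e) N h \<and> (\<forall>u\<in>mcarrier (Ae_right smul e). g (h u) = f u)"
    using coord_combination_rhom[OF N n] by auto
qed

end


section \<open>Simple quotients of a left ideal\<close>

definition coset :: "'a::ring set \<Rightarrow> 'a \<Rightarrow> 'a set" where
  "coset N u = {u + n | n. n \<in> N}"

text \<open>Scaling and the action add \<open>N\<close> so that their results are whole cosets; for instance
  scaling a coset by \<open>0\<close> gives \<open>N\<close> rather than \<open>{0}\<close>.\<close>

definition lideal_quotient ::
  "(complex \<Rightarrow> 'a::ring \<Rightarrow> 'a) \<Rightarrow> 'a \<Rightarrow> 'a set \<Rightarrow> ('a set, 'a) amod" where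
  "lideal_quotient smul f N =
    \<lparr>mcarrier = coset N ` lideal f,
     madd = (\<lambda>X Y. {x + y | x y. x \<in> X \<and> y \<in> Y}),
     mzero = N,
     mscal = (\<lambda>c X. {smul c x + n | x n. x \<in> X \<and> n \<in> N}),
     mact = (\<lambda>a X. {a * x + n | x n. x \<in> X \<and> n \<in> N})\<rparr>"

context complex_algebra
begin

definition lideal_submodule :: "'a \<Rightarrow> 'a set \<Rightarrow> bool" where
  "lideal_submodule f N \<longleftrightarrow> vs.subspace N \<and> N \<subseteq> lideal f \<and> (\<forall>a. \<forall>n\<in>N. a * n \<in> N)"

lemma lideal_submoduleD:
  assumes "lideal_submodule f N"
  shows "0 \<in> N" and "x \<in> N \<Longrightarrow> y \<in> N \<Longrightarrow> x + y \<in> N" and "x \<in> N \<Longrightarrow> smul c x \<in> N"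
    and "x \<in> N \<Longrightarrow> a * x \<in> N" and "N \<subseteq> lideal f"
  using assms vs.subspace_0 vs.subspace_add vs.subspace_scale
  unfolding lideal_submodule_def by blast+

context
  fixes N :: "'a set"
  assumes N: "vs.subspace N"
begin

lemma coset_self: "u \<in> coset N u"
  unfolding coset_def using vs.subspace_0[OF N] by force

lemma coset_zero: "coset N 0 = N"
  unfolding coset_def by auto

lemma coset_subset: "u - v \<in> N \<Longrightarrow> coset N u \<subseteq> coset N v"
proof
  fix x assume uv: "u - v \<in> N" and "x \<in> coset N u"
  then obtain n where n: "n \<in> N" "x = u + n"
    unfolding coset_def by auto
  then have "x = v + ((u - v) + n)"
    by (simp add: algebra_simps)
  then show "x \<in> coset N v"
    unfolding coset_def using vs.subspace_add[OF N uv n(1)] by blast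
qed

lemma coset_eq_iff: "coset N u = coset N v \<longleftrightarrow> u - v \<in> N"
proof
  assume "coset N u = coset N v"
  then obtain n where "n \<in> N" "u = v + n"
    using coset_self[of u] unfolding coset_def by auto
  then show "u - v \<in> N"
    by simp
next
  assume uv: "u - v \<in> N"
  moreover have "v - u \<in> N"
    using vs.subspace_neg[OF N uv] by simp
  ultimately show "coset N u = coset N v"
    using coset_subset by blast
qed

lemma coset_add: "{x + y | x y. x \<in> coset N u \<and> y \<in> coset N v} = coset N (u + v)"
proof (intro equalityI subsetI)
  fix z assume "z \<in> {x + y | x y. x \<in> coset N u \<and> y \<in> coset N v}"
  then obtain n m where nm: "n \<in> N" "m \<in> N" "z = (u + n) + (v + m)"
    unfolding coset_def by auto
  then have "z = (u + v) + (n + m)"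
    by (simp add: algebra_simps)
  then show "z \<in> coset N (u + v)"
    unfolding coset_def using vs.subspace_add[OF N nm(1,2)] by blast
next
  fix z assume "z \<in> coset N (u + v)"
  then obtain n where "n \<in> N" "z = (u + n) + v"
    unfolding coset_def by (auto simp: algebra_simps)
  then show "z \<in> {x + y | x y. x \<in> coset N u \<and> y \<in> coset N v}"
    using coset_self[of v] unfolding coset_def by blast
qed

lemma coset_image:
  assumes hom: "\<And>x y. \<phi> (x + y) = \<phi> x + \<phi> y" and inv: "\<And>n. n \<in> N \<Longrightarrow> \<phi> n \<in> N"
  shows "{\<phi> x + n | x n. x \<in> coset N u \<and> n \<in> N} = coset N (\<phi> u)"
proof (intro equalityI subsetI)
  fix z assume "z \<in> {\<phi> x + n | x n. x \<in> coset N u \<and> n \<in> N}"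
  then obtain m n where mn: "m \<in> N" "n \<in> N" "z = \<phi> (u + m) + n"
    unfolding coset_def by auto
  then have "z = \<phi> u + (\<phi> m + n)"
    by (simp add: hom add.assoc)
  then show "z \<in> coset N (\<phi> u)"
    unfolding coset_def using vs.subspace_add[OF N inv[OF mn(1)] mn(2)] by blast
next
  fix z assume "z \<in> coset N (\<phi> u)"
  then show "z \<in> {\<phi> x + n | x n. x \<in> coset N u \<and> n \<in> N}"
    using coset_self[of u] unfolding coset_def by blast
qed

end

context
  fixes f :: 'a and N :: "'a set"
  assumes N: "lideal_submodule f N"
begin

lemma lideal_submodule_subspace: "vs.subspace N"
  using N unfolding lideal_submodule_def by simp

lemma lideal_quotient_simps [simp]:
  "mcarrier (lideal_quotient smul f N) = coset N ` lideal f"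
  "mzero (lideal_quotient smul f N) = coset N 0"
  "madd (lideal_quotient smul f N) (coset N u) (coset N v) = coset N (u + v)"
  "mscal (lideal_quotient smul f N) c (coset N u) = coset N (smul c u)"
  "mact (lideal_quotient smul f N) a (coset N u) = coset N (a * u)"
proof -
  note sN = lideal_submodule_subspace
  show "mcarrier (lideal_quotient smul f N) = coset N ` lideal f"
    by (simp add: lideal_quotient_def)
  show "mzero (lideal_quotient smul f N) = coset N 0"
    by (simp add: lideal_quotient_def coset_zero[OF sN])
  show "madd (lideal_quotient smul f N) (coset N u) (coset N v) = coset N (u + v)"
    by (simp add: lideal_quotient_def coset_add[OF sN])
  show "mscal (lideal_quotient smul f N) c (coset N u) = coset N (smul c u)"
    using coset_image[OF sN, of "smul c"] vs.subspace_scale[OF sN]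
    by (simp add: lideal_quotient_def vs.scale_right_distrib)
  show "mact (lideal_quotient smul f N) a (coset N u) = coset N (a * u)"
    using coset_image[OF sN, of "\<lambda>x. a * x"] N
    by (simp add: lideal_quotient_def lideal_submodule_def distrib_left)
qed

lemma coset_in_lideal_quotient: "u \<in> lideal f \<Longrightarrow> coset N u \<in> coset N ` lideal f"
  by blast

lemma lmod_lideal_quotient: "lmod smul (lideal_quotient smul f N)"
proof -
  have inverse: "\<exists>Y\<in>coset N ` lideal f. madd (lideal_quotient smul f N) X Y = coset N 0"
    if X: "X \<in> coset N ` lideal f" for X
  proof -
    obtain u where "u \<in> lideal f" "X = coset N u"
      using X by blast
    then show ?thesis
      by (intro bexI[of _ "coset N (- u)"]) auto
  qed
  have "cvs (lideal_quotient smul f N)"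
    unfolding cvs_def Let_def lideal_quotient_simps(1,2)
    by (intro conjI ballI allI inverse; (elim imageE)?;
        simp add: coset_in_lideal_quotient algebra_simps)
  then show ?thesis
    unfolding lmod_def Let_def lideal_quotient_simps(1)
    by (intro conjI ballI allI; (elim imageE)?;
        simp add: coset_in_lideal_quotient algebra_simps scale_mult_left mult_scale_right)
qed

lemma quasicoherent_lideal_quotient:
  assumes units: "\<And>u::'a. \<exists>x. x * u = u"
  shows "quasicoherent (lideal_quotient smul f N)"
  unfolding quasicoherent_def lideal_quotient_simps(1)
proof
  fix X assume "X \<in> coset N ` lideal f"
  then obtain u where X: "X = coset N u"
    by blast
  obtain x where "x * u = u"
    using units[of u] by blast
  then have "mact (lideal_quotient smul f N) x X = X"
    unfolding X by simp
  then show "\<exists>x. mact (lideal_quotient smul f N) x X = X" ..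
qed

lemma lsubmod_lideal_quotient_preimage:
  assumes S: "lsubmod (lideal_quotient smul f N) S"
  shows "lideal_submodule f {u \<in> lideal f. coset N u \<in> S}"
    and "N \<subseteq> {u \<in> lideal f. coset N u \<in> S}"
proof -
  have S0: "coset N 0 \<in> S"
    using S unfolding lsubmod_def by simp
  have S_add: "coset N (u + v) \<in> S" if "coset N u \<in> S" "coset N v \<in> S" for u v
    using S that unfolding lsubmod_def by (metis lideal_quotient_simps(3))
  have S_scale: "coset N (smul c u) \<in> S" if "coset N u \<in> S" for c u
    using S that unfolding lsubmod_def by (metis lideal_quotient_simps(4))
  have S_mult: "coset N (a * u) \<in> S" if "coset N u \<in> S" for a u
    using S that unfolding lsubmod_def by (metis lideal_quotient_simps(5))
  show "lideal_submodule f {u \<in> lideal f. coset N u \<in> S}"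
    unfolding lideal_submodule_def vs.subspace_def using S0 S_add S_scale S_mult by auto
  show "N \<subseteq> {u \<in> lideal f. coset N u \<in> S}"
  proof
    fix n assume n: "n \<in> N"
    then have "coset N n = coset N 0"
      using coset_eq_iff[OF lideal_submodule_subspace] by simp
    then show "n \<in> {u \<in> lideal f. coset N u \<in> S}"
      using n N S0 unfolding lideal_submodule_def by auto
  qed
qed

lemma irreducible_lideal_quotient:
  assumes idem: "f * f = f" and f_notin: "f \<notin> N"
    and maximal: "\<And>N'. lideal_submodule f N' \<Longrightarrow> f \<notin> N' \<Longrightarrow> N \<subseteq> N' \<Longrightarrow> N' = N"
  shows "irreducible_mod (lideal_quotient smul f N)"
proof -
  let ?Q = "lideal_quotient smul f N"
  have f_nonzero: "coset N f \<noteq> coset N 0"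
    using f_notin coset_eq_iff[OF lideal_submodule_subspace] by simp
  have "S = {coset N 0} \<or> S = coset N ` lideal f" if S: "lsubmod ?Q S" for S
  proof (cases "coset N f \<in> S")
    case True
    have "coset N (a * f) \<in> S" for a
      using S True unfolding lsubmod_def by (metis lideal_quotient_simps(5))
    then have "coset N ` lideal f \<subseteq> S"
      unfolding lideal_def by blast
    then show ?thesis
      using S unfolding lsubmod_def by auto
  next
    case False
    then have preimage: "{u \<in> lideal f. coset N u \<in> S} = N"
      using maximal lsubmod_lideal_quotient_preimage[OF S] by blast
    have "X = coset N 0" if X: "X \<in> S" for X
    proof -
      obtain u where u: "u \<in> lideal f" "X = coset N u"
        using S X unfolding lsubmod_def by auto
      then have "u \<in> N"
        using X preimage by blast
      then show ?thesis
        using u coset_eq_iff[OF lideal_submodule_subspace] by simp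
    qed
    then show ?thesis
      using S unfolding lsubmod_def by auto
  qed
  moreover have "coset N ` lideal f \<noteq> {coset N 0}"
    using f_nonzero idempotent_in_lideal[OF idem] by blast
  ultimately show ?thesis
    unfolding irreducible_mod_def by simp
qed

text \<open>A map out of \<open>A e\<close> is determined by the image of \<open>e = e e\<close>, which lies in \<open>e (A f / N)\<close>.\<close>

lemma lhom_from_Ae_lideal_quotient_vanishes:
  assumes h: "lhom_from_Ae smul e (lideal_quotient smul f N) h" and idem: "e * e = e"
    and eAf: "\<And>u. u \<in> lideal f \<Longrightarrow> e * u \<in> N"
  shows "h ` lideal e \<subseteq> {coset N 0}"
proof -
  have e: "e \<in> lideal e"
    using idempotent_in_lideal[OF idem] .
  obtain u where u: "u \<in> lideal f" "h e = coset N u"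
    using h e unfolding lhom_from_Ae_def by auto
  have "h e = h (e * e)"
    using idem by simp
  also have "\<dots> = coset N (e * u)"
    using h e u unfolding lhom_from_Ae_def by auto
  also have "\<dots> = coset N 0"
    using eAf[OF u(1)] coset_eq_iff[OF lideal_submodule_subspace] by simp
  finally have he: "h e = coset N 0" .
  have "h (w * e) = coset N 0" for w
    using h e he unfolding lhom_from_Ae_def by auto
  then show ?thesis
    unfolding lideal_def by auto
qed

end

lemma lideal_submodule_chain_Union:
  assumes nonempty: "\<C> \<noteq> {}" and chain: "subset.chain {N. lideal_submodule f N} \<C>"
  shows "lideal_submodule f (\<Union>\<C>)"
proof -
  have members: "lideal_submodule f N" if "N \<in> \<C>" for N
    using chain that unfolding subset_chain_def by auto
  have zero: "0 \<in> \<Union>\<C>"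
    using nonempty lideal_submoduleD(1)[OF members] by blast
  have add: "x + y \<in> \<Union>\<C>" if xy: "x \<in> \<Union>\<C>" "y \<in> \<Union>\<C>" for x y
  proof -
    have "finite {x, y}" "{x, y} \<subseteq> \<Union>\<C>"
      using xy by auto
    then obtain N where "N \<in> \<C>" "{x, y} \<subseteq> N"
      using finite_subset_Union_chain[OF _ _ nonempty chain] by blast
    then show ?thesis
      using lideal_submoduleD(2)[OF members] by blast
  qed
  have scale: "smul c x \<in> \<Union>\<C>" and mult: "a * x \<in> \<Union>\<C>" if "x \<in> \<Union>\<C>" for c a x
    using that lideal_submoduleD(3,4)[OF members] by blast+
  have "\<Union>\<C> \<subseteq> lideal f"
    using lideal_submoduleD(5)[OF members] by blast
  then show ?thesis
    unfolding lideal_submodule_def vs.subspace_def using zero add scale mult by simp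
qed

lemma exists_maximal_lideal_submodule:
  assumes "lideal_submodule f L" and "f \<notin> L"
  obtains N where "lideal_submodule f N" "f \<notin> N" "L \<subseteq> N"
    and "\<And>N'. lideal_submodule f N' \<Longrightarrow> f \<notin> N' \<Longrightarrow> N \<subseteq> N' \<Longrightarrow> N' = N"
proof -
  let ?\<A> = "{N. lideal_submodule f N \<and> f \<notin> N \<and> L \<subseteq> N}"
  have chains: "\<Union>\<C> \<in> ?\<A>" if "\<C> \<noteq> {}" "subset.chain ?\<A> \<C>" for \<C>
  proof -
    have members: "\<C> \<subseteq> ?\<A>"
      using that(2) unfolding subset_chain_def by blast
    have "subset.chain {N. lideal_submodule f N} \<C>"
      using that(2) unfolding subset_chain_def by blast
    then have "lideal_submodule f (\<Union>\<C>)"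
      by (rule lideal_submodule_chain_Union[OF that(1)])
    moreover have "f \<notin> \<Union>\<C>" "L \<subseteq> \<Union>\<C>"
      using members that(1) by blast+
    ultimately show ?thesis
      by blast
  qed
  have "\<exists>N\<in>?\<A>. \<forall>X\<in>?\<A>. N \<subseteq> X \<longrightarrow> X = N"
  proof (rule subset_Zorn_nonempty)
    show "?\<A> \<noteq> {}"
      using assms by blast
  qed (rule chains)
  then obtain N where N: "lideal_submodule f N" "f \<notin> N" "L \<subseteq> N"
    and maximal: "\<forall>X\<in>?\<A>. N \<subseteq> X \<longrightarrow> X = N"
    by blast
  show thesis
  proof (rule that[OF N])
    fix N' assume "lideal_submodule f N'" "f \<notin> N'" "N \<subseteq> N'"
    then show "N' = N"
      using maximal N(3) by blast
  qed
qed

lemma lideal_submodule_span_through: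
  "lideal_submodule f (vs.span {x * e * y * f | x y. True})"
  unfolding lideal_submodule_def
proof (intro conjI allI ballI)
  let ?G = "{x * e * y * f | x y. True}"
  show "vs.subspace (vs.span ?G)"
    by simp
  show "vs.span ?G \<subseteq> lideal f"
  proof (rule vs.span_minimal[OF _ subspace_lideal])
    show "?G \<subseteq> lideal f"
      unfolding lideal_def by blast
  qed
  fix a v assume "v \<in> vs.span ?G"
  then show "a * v \<in> vs.span ?G"
  proof (rule mult_span_subset[rotated])
    fix s assume "s \<in> ?G"
    then obtain x y where "s = x * e * y * f"
      by blast
    then have "a * s = (a * x) * e * y * f"
      by (simp add: mult.assoc)
    then show "a * s \<in> ?G"
      by blast
  qed
qed

text \<open>Otherwise \<open>A f / N\<close> would be a simple quasicoherent module that is not a quotient of \<open>A e\<close>.\<close>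

lemma generating_acts_on_simple_quotient:
  assumes gen: "generating smul e" and idem: "f * f = f" and units: "\<And>u::'a. \<exists>x. x * u = u"
    and N: "lideal_submodule f N" and f_notin: "f \<notin> N"
    and maximal: "\<And>N'. lideal_submodule f N' \<Longrightarrow> f \<notin> N' \<Longrightarrow> N \<subseteq> N' \<Longrightarrow> N' = N"
  shows "\<exists>u\<in>lideal f. e * u \<notin> N"
proof (rule ccontr)
  assume "\<not> (\<exists>u\<in>lideal f. e * u \<notin> N)"
  then have eAf: "\<And>u. u \<in> lideal f \<Longrightarrow> e * u \<in> N"
    by blast
  let ?Q = "lideal_quotient smul f N"
  have "lmod smul ?Q" "quasicoherent ?Q" "irreducible_mod ?Q"
    using lmod_lideal_quotient[OF N] quasicoherent_lideal_quotient[OF N units]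
      irreducible_lideal_quotient[OF N idem f_notin maximal] by auto
  then obtain h where h: "lhom_from_Ae smul e ?Q h" and onto: "h ` lideal e = mcarrier ?Q"
    using gen unfolding generating_def by blast
  have ee: "e * e = e"
    using gen unfolding generating_def by simp
  have "coset N ` lideal f = h ` lideal e"
    using onto unfolding lideal_quotient_simps(1)[OF N] by (rule sym)
  also have "\<dots> \<subseteq> {coset N 0}"
    by (rule lhom_from_Ae_lideal_quotient_vanishes[OF N h ee eAf])
  finally have "coset N ` lideal f \<subseteq> {coset N 0}" .
  moreover have "coset N f \<noteq> coset N 0"
    using f_notin coset_eq_iff[OF lideal_submodule_subspace[OF N]] by simp
  ultimately show False
    using idempotent_in_lideal[OF idem] by blast
qed

lemma idempotent_in_span_through_generating:
  assumes gen: "generating smul e" and idem: "f * f = f" and units: "\<And>u::'a. \<exists>x. x * u = u"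
  shows "f \<in> vs.span {x * e * y * f | x y. True}"
proof (rule ccontr)
  let ?G = "{x * e * y * f | x y. True}"
  assume "f \<notin> vs.span ?G"
  then obtain N where N: "lideal_submodule f N" and f_notin: "f \<notin> N"
    and G_N: "vs.span ?G \<subseteq> N"
    and maximal: "\<And>N'. lideal_submodule f N' \<Longrightarrow> f \<notin> N' \<Longrightarrow> N \<subseteq> N' \<Longrightarrow> N' = N"
    using exists_maximal_lideal_submodule[OF lideal_submodule_span_through] by blast
  obtain u where u: "u \<in> lideal f" and "e * u \<notin> N"
    using generating_acts_on_simple_quotient[OF gen idem units N f_notin maximal] by blast
  moreover have "e * u \<in> vs.span ?G"
  proof (rule vs.span_base)
    obtain a where "u = a * f"
      using u unfolding lideal_def by blast
    then have "e * u = e * e * a * f"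
      using gen unfolding generating_def by (simp add: mult.assoc)
    then show "e * u \<in> ?G"
      by blast
  qed
  ultimately show False
    using G_N by blast
qed

end


section \<open>Local units in AUF algebras\<close>

locale AUF_algebra = complex_algebra smul for smul :: "complex \<Rightarrow> 'a::ring \<Rightarrow> 'a" +
  fixes E :: "'a set"
  assumes idem: "\<And>f. f \<in> E \<Longrightarrow> f * f = f"
    and orth: "\<And>f g. f \<in> E \<Longrightarrow> g \<in> E \<Longrightarrow> f \<noteq> g \<Longrightarrow> f * g = 0"
    and spanning: "UNIV \<subseteq> vs.span (\<Union>f\<in>E. \<Union>g\<in>E. corner f g)"
begin

lemma corner_mult_idempotent:
  assumes "f \<in> E" "g \<in> E" "a \<in> corner f g" "h \<in> E"
  shows "h * a = (if h = f then a else 0)" and "a * h = (if h = g then a else 0)"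
proof -
  obtain y where a: "a = f * y * g"
    using assms(3) unfolding corner_def by blast
  have "h * a = (h * f) * y * g" "a * h = f * y * (g * h)"
    unfolding a by (simp_all add: mult.assoc)
  moreover have "f * a = a" "a * g = a"
    unfolding a using idem assms(1,2) by (simp_all flip: mult.assoc) (simp add: mult.assoc)
  ultimately show "h * a = (if h = f then a else 0)" "a * h = (if h = g then a else 0)"
    using orth assms by auto
qed

lemma finite_idempotent_support:
  "\<exists>F. finite F \<and> F \<subseteq> E \<and> (\<forall>h\<in>E - F. h * x = 0 \<and> x * h = 0) \<and> (\<Sum>h\<in>F. h * x) = x"
proof -
  let ?P = "\<lambda>x. \<exists>F. finite F \<and> F \<subseteq> E \<and> (\<forall>h\<in>E - F. h * x = 0 \<and> x * h = 0) \<and> (\<Sum>h\<in>F. h * x) = x"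
  have enlarge: "(\<Sum>h\<in>F \<union> G. h * x) = (\<Sum>h\<in>F. h * x)"
    if "finite F" "finite G" "G \<subseteq> E" "\<forall>h\<in>E - F. h * x = 0" for F G x
    using that by (intro sum.mono_neutral_right) auto
  have subspace_P: "vs.subspace {x. ?P x}"
  proof (rule vs.subspaceI, unfold mem_Collect_eq)
    show "?P 0"
      by (intro exI[of _ "{}"]) auto
  next
    fix x y assume "?P x" "?P y"
    then obtain F G where F: "finite F" "F \<subseteq> E" "\<forall>h\<in>E - F. h * x = 0 \<and> x * h = 0" "(\<Sum>h\<in>F. h * x) = x"
      and G: "finite G" "G \<subseteq> E" "\<forall>h\<in>E - G. h * y = 0 \<and> y * h = 0" "(\<Sum>h\<in>G. h * y) = y"
      by blast
    have "(\<Sum>h\<in>F \<union> G. h * (x + y)) = (\<Sum>h\<in>F \<union> G. h * x) + (\<Sum>h\<in>G \<union> F. h * y)"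
      by (simp add: distrib_left sum.distrib Un_commute)
    also have "\<dots> = x + y"
      using enlarge[of F G x] enlarge[of G F y] F G by simp
    finally show "?P (x + y)"
      using F G by (intro exI[of _ "F \<union> G"]) (auto simp: distrib_left distrib_right)
  next
    fix c x assume "?P x"
    then obtain F where F: "finite F" "F \<subseteq> E" "\<forall>h\<in>E - F. h * x = 0 \<and> x * h = 0" "(\<Sum>h\<in>F. h * x) = x"
      by blast
    have "(\<Sum>h\<in>F. h * smul c x) = smul c x"
      using F(4) by (simp add: mult_scale_right flip: vs.scale_sum_right)
    then show "?P (smul c x)"
      using F by (intro exI[of _ F]) (auto simp: mult_scale_right scale_mult_left)
  qed
  have basis_P: "?P a" if a: "a \<in> (\<Union>f\<in>E. \<Union>g\<in>E. corner f g)" for a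
  proof -
    obtain f g where fg: "f \<in> E" "g \<in> E" "a \<in> corner f g"
      using a by blast
    note components = corner_mult_idempotent[OF fg]
    have "(\<Sum>h\<in>{f, g}. h * a) = a"
      using components fg by (cases "f = g") auto
    then show ?thesis
      using components fg by (intro exI[of _ "{f, g}"]) auto
  qed
  have "x \<in> vs.span (\<Union>f\<in>E. \<Union>g\<in>E. corner f g)"
    using spanning by blast
  then show "?P x"
    by (rule vs.span_induct[OF _ subspace_P basis_P])
qed

lemma finite_left_support: "finite {f\<in>E. f * x \<noteq> 0}"
  and finite_right_support: "finite {f\<in>E. x * f \<noteq> 0}"
  and sum_left_support: "(\<Sum>f\<in>{f\<in>E. f * x \<noteq> 0}. f * x) = x"
proof -
  obtain F where F: "finite F" "F \<subseteq> E" "\<forall>h\<in>E - F. h * x = 0 \<and> x * h = 0" "(\<Sum>h\<in>F. h * x) = x"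
    using finite_idempotent_support by blast
  have "{f\<in>E. f * x \<noteq> 0} \<subseteq> F" "{f\<in>E. x * f \<noteq> 0} \<subseteq> F"
    using F(3) by blast+
  then show "finite {f\<in>E. f * x \<noteq> 0}" "finite {f\<in>E. x * f \<noteq> 0}"
    using F(1) finite_subset by blast+
  have "(\<Sum>f\<in>{f\<in>E. f * x \<noteq> 0}. f * x) = (\<Sum>h\<in>F. h * x)"
    by (rule sum.mono_neutral_left) (use F in auto)
  then show "(\<Sum>f\<in>{f\<in>E. f * x \<noteq> 0}. f * x) = x"
    using F(4) by simp
qed

lemma local_unit: "\<exists>u. u * x = (x::'a)"
proof
  show "(\<Sum>f\<in>{f\<in>E. f * x \<noteq> 0}. f) * x = x"
    using sum_left_support[of x] by (simp add: sum_distrib_right)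
qed

end


section \<open>The coordinate system of a generating idempotent\<close>

lemma left_coord_system_reindex:
  assumes lcs: "left_coord_system smul e I \<alpha> \<alpha>c" and inj: "inj_on \<phi> I"
  shows "left_coord_system smul e (\<phi> ` I)
    (\<lambda>j. \<alpha> (the_inv_into I \<phi> j)) (\<lambda>j. \<alpha>c (the_inv_into I \<phi> j))"
proof -
  let ?\<psi> = "the_inv_into I \<phi>"
  have \<psi>_in: "?\<psi> j \<in> I" if "j \<in> \<phi> ` I" for j
    using the_inv_into_into[OF inj that] by blast
  have image: "{j\<in>\<phi> ` I. P (?\<psi> j)} = \<phi> ` {i\<in>I. P i}" for P
    using inj by (auto simp: the_inv_into_f_f)
  have inj_sub: "inj_on \<phi> {i\<in>I. P i}" for P
    using inj by (rule inj_on_subset) blast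
  have finite_iff: "finite {j\<in>\<phi> ` I. P (?\<psi> j)} \<longleftrightarrow> finite {i\<in>I. P i}" for P
    unfolding image using finite_image_iff[OF inj_sub] .
  have sum_eq: "(\<Sum>j\<in>{j\<in>\<phi> ` I. P (?\<psi> j)}. g (?\<psi> j)) = (\<Sum>i\<in>{i\<in>I. P i}. g i)"
    for P and g :: "_ \<Rightarrow> 'a"
    unfolding image using inj by (simp add: sum.reindex[OF inj_sub] the_inv_into_f_f)
  show ?thesis
    unfolding left_coord_system_def
  proof (intro conjI ballI allI)
    fix j assume "j \<in> \<phi> ` I"
    then show "rmap smul e (corner e e) (lideal e) (\<alpha> (?\<psi> j))"
      "rmap smul e (lideal e) (corner e e) (\<alpha>c (?\<psi> j))"
      using lcs \<psi>_in unfolding left_coord_system_def by blast+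
  next
    fix \<xi> assume "\<xi> \<in> lideal e"
    then show "finite {j\<in>\<phi> ` I. \<alpha>c (?\<psi> j) \<xi> \<noteq> 0}"
      "(\<Sum>j\<in>{j\<in>\<phi> ` I. \<alpha>c (?\<psi> j) \<xi> \<noteq> 0}. \<alpha> (?\<psi> j) (\<alpha>c (?\<psi> j) \<xi>)) = \<xi>"
      using lcs finite_iff[of "\<lambda>i. \<alpha>c i \<xi> \<noteq> 0"]
        sum_eq[where P = "\<lambda>i. \<alpha>c i \<xi> \<noteq> 0" and g = "\<lambda>i. \<alpha> i (\<alpha>c i \<xi>)"]
      unfolding left_coord_system_def by simp_all
  next
    fix x
    show "finite {j\<in>\<phi> ` I. \<exists>b\<in>corner e e. x * \<alpha> (?\<psi> j) b \<noteq> 0}"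
      "finite {j\<in>\<phi> ` I. \<exists>\<xi>\<in>lideal e. \<alpha>c (?\<psi> j) (x * \<xi>) \<noteq> 0}"
      using lcs finite_iff[of "\<lambda>i. \<exists>b\<in>corner e e. x * \<alpha> i b \<noteq> 0"]
        finite_iff[of "\<lambda>i. \<exists>\<xi>\<in>lideal e. \<alpha>c i (x * \<xi>) \<noteq> 0"]
      unfolding left_coord_system_def by simp_all
  qed
qed

context AUF_algebra
begin

context
  fixes e :: 'a and S :: "'i set" and owner u v :: "'i \<Rightarrow> 'a" and c :: "'i \<Rightarrow> complex"
  assumes owner: "\<And>s. s \<in> S \<Longrightarrow> owner s \<in> E"
    and left: "\<And>s. s \<in> S \<Longrightarrow> owner s * u s = u s"
    and right: "\<And>s. s \<in> S \<Longrightarrow> e * v s = v s" "\<And>s. s \<in> S \<Longrightarrow> v s * owner s = v s"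
    and fibres: "\<And>f. f \<in> E \<Longrightarrow> finite {s\<in>S. owner s = f}"
    and decomposition: "\<And>f. f \<in> E \<Longrightarrow> (\<Sum>s\<in>{s\<in>S. owner s = f}. smul (c s) (u s * v s)) = f"
begin

lemma finite_owner_preimage: "finite D \<Longrightarrow> D \<subseteq> E \<Longrightarrow> finite {s\<in>S. owner s \<in> D}"
proof -
  assume "finite D" "D \<subseteq> E"
  moreover have "{s\<in>S. owner s \<in> D} = (\<Union>f\<in>D. {s\<in>S. owner s = f})"
    by blast
  ultimately show ?thesis
    using fibres by auto
qed

lemma factor_through_owner: "s \<in> S \<Longrightarrow> v s * x = v s * (owner s * x)"
  using right(2) by (metis mult.assoc)

lemma factorization_coordinates: "s \<in> S \<Longrightarrow> rmap smul e (lideal e) (corner e e) (\<lambda>\<xi>. v s * \<xi>)"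
  unfolding rmap_def
proof (intro conjI ballI allI)
  fix \<xi> assume s: "s \<in> S" and "\<xi> \<in> lideal e"
  then obtain w where w: "\<xi> = w * e"
    unfolding lideal_def by blast
  have "e * (v s * w) * e = (e * v s) * (w * e)"
    by (simp add: mult.assoc)
  then have "v s * \<xi> = e * (v s * w) * e"
    using right(1)[OF s] w by simp
  then show "v s * \<xi> \<in> corner e e"
    unfolding corner_def by blast
qed (simp_all add: distrib_left mult_scale_right mult.assoc)

lemma factorization_expansion:
  "finite {s\<in>S. v s * \<xi> \<noteq> 0} \<and>
    (\<Sum>s\<in>{s\<in>S. v s * \<xi> \<noteq> 0}. smul (c s) (u s * (v s * \<xi>))) = \<xi>"
proof -
  let ?D = "{f\<in>E. f * \<xi> \<noteq> 0}"
  let ?T = "{s\<in>S. owner s \<in> ?D}"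
  have T: "finite ?T"
    using finite_owner_preimage finite_left_support by blast
  have support: "{s\<in>S. v s * \<xi> \<noteq> 0} \<subseteq> ?T"
  proof
    fix s assume s: "s \<in> {s\<in>S. v s * \<xi> \<noteq> 0}"
    then have "owner s * \<xi> \<noteq> 0"
      using factor_through_owner[of s \<xi>] by auto
    then show "s \<in> ?T"
      using s owner[of s] by blast
  qed
  have summand: "smul (c s) (u s * (v s * \<xi>)) = smul (c s) (u s * v s) * \<xi>" for s
    by (simp add: scale_mult_left mult.assoc)
  have "(\<Sum>s\<in>{s\<in>S. v s * \<xi> \<noteq> 0}. smul (c s) (u s * (v s * \<xi>))) =
      (\<Sum>s\<in>?T. smul (c s) (u s * v s) * \<xi>)"
    using T support by (intro sum.mono_neutral_cong_left) (auto simp flip: summand)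
  also have "\<dots> = (\<Sum>f\<in>?D. \<Sum>s\<in>{s\<in>?T. owner s = f}. smul (c s) (u s * v s) * \<xi>)"
    using T finite_left_support by (intro sum.group[symmetric]) auto
  also have "\<dots> = (\<Sum>f\<in>?D. f * \<xi>)"
  proof (rule sum.cong[OF refl])
    fix f assume f: "f \<in> ?D"
    then have "{s\<in>?T. owner s = f} = {s\<in>S. owner s = f}"
      by blast
    then show "(\<Sum>s\<in>{s\<in>?T. owner s = f}. smul (c s) (u s * v s) * \<xi>) = f * \<xi>"
      using decomposition f by (simp flip: sum_distrib_right)
  qed
  also have "\<dots> = \<xi>"
    by (rule sum_left_support)
  finally show ?thesis
    using T support by (simp add: finite_subset)
qed

lemma finite_factorization_supports:
  "finite {s\<in>S. \<exists>b\<in>corner e e. x * smul (c s) (u s * b) \<noteq> 0}"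
  "finite {s\<in>S. \<exists>\<xi>\<in>lideal e. v s * (x * \<xi>) \<noteq> 0}"
proof -
  have "{s\<in>S. \<exists>b\<in>corner e e. x * smul (c s) (u s * b) \<noteq> 0} \<subseteq>
      {s\<in>S. owner s \<in> {f\<in>E. x * f \<noteq> 0}}"
  proof
    fix s assume "s \<in> {s\<in>S. \<exists>b\<in>corner e e. x * smul (c s) (u s * b) \<noteq> 0}"
    then obtain b where s: "s \<in> S" and b: "x * smul (c s) (u s * b) \<noteq> 0"
      by blast
    have "x * smul (c s) (u s * b) = smul (c s) ((x * owner s) * u s * b)"
      using left[OF s] by (simp add: mult_scale_right mult.assoc)
    then have "x * owner s \<noteq> 0"
      using b by auto
    then show "s \<in> {s\<in>S. owner s \<in> {f\<in>E. x * f \<noteq> 0}}"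
      using s owner[OF s] by blast
  qed
  then show "finite {s\<in>S. \<exists>b\<in>corner e e. x * smul (c s) (u s * b) \<noteq> 0}"
    using finite_owner_preimage[OF finite_right_support] finite_subset by blast
  have "{s\<in>S. \<exists>\<xi>\<in>lideal e. v s * (x * \<xi>) \<noteq> 0} \<subseteq> {s\<in>S. owner s \<in> {f\<in>E. f * x \<noteq> 0}}"
  proof
    fix s assume "s \<in> {s\<in>S. \<exists>\<xi>\<in>lideal e. v s * (x * \<xi>) \<noteq> 0}"
    then obtain \<xi> where s: "s \<in> S" and \<xi>: "v s * (x * \<xi>) \<noteq> 0"
      by blast
    have "v s * (x * \<xi>) = v s * (owner s * x) * \<xi>"
      using factor_through_owner[OF s] by (simp add: mult.assoc)
    then have "owner s * x \<noteq> 0"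
      using \<xi> by auto
    then show "s \<in> {s\<in>S. owner s \<in> {f\<in>E. f * x \<noteq> 0}}"
      using s owner[OF s] by blast
  qed
  then show "finite {s\<in>S. \<exists>\<xi>\<in>lideal e. v s * (x * \<xi>) \<noteq> 0}"
    using finite_owner_preimage[OF finite_left_support] finite_subset by blast
qed

lemma left_coord_system_of_factorizations:
  "left_coord_system smul e S (\<lambda>s b. smul (c s) (u s * b)) (\<lambda>s \<xi>. v s * \<xi>)"
  unfolding left_coord_system_def
  using rmap_scaled_left_mult factorization_coordinates factorization_expansion
    finite_factorization_supports
  by simp

end

text \<open>Zero summands are discarded so that the decompositions of distinct idempotents share no
  terms (see \<open>decomposition_groups_disjoint\<close>).\<close>

lemma idempotent_decomposition:
  assumes gen: "generating smul e" and f: "f \<in> E"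
  shows "\<exists>t r. finite t \<and> t \<subseteq> {(f * x * e) * (e * y * f) | x y. True} - {0} \<and>
    (\<Sum>a\<in>t. smul (r a) a) = f"
proof -
  let ?G = "{(f * x * e) * (e * y * f) | x y. True}"
  have ee: "e * e = e"
    using gen unfolding generating_def by simp
  have "f * f \<in> vs.span ?G"
  proof (rule mult_span_subset)
    show "f \<in> vs.span {x * e * y * f | x y. True}"
      by (rule idempotent_in_span_through_generating[OF gen idem[OF f] local_unit])
    fix s assume "s \<in> {x * e * y * f | x y. True}"
    then obtain x y where "s = x * e * y * f"
      by blast
    then have "f * s = (f * x * e) * (e * y * f)"
      using ee by (simp add: mult.assoc idempotent_absorb)
    then show "f * s \<in> ?G"
      by blast
  qed
  then obtain t r where t: "finite t" "t \<subseteq> ?G" and sum: "(\<Sum>a\<in>t. smul (r a) a) = f"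
    using idem[OF f] unfolding vs.span_explicit by auto
  have "(\<Sum>a\<in>t - {0}. smul (r a) a) = f"
    using t(1) sum by (subst sum.mono_neutral_left[of t]) auto
  then show ?thesis
    using t by (intro exI[of _ "t - {0}"] exI[of _ r]) auto
qed

lemma idempotent_decompositions:
  assumes gen: "generating smul e"
  obtains T R where "\<And>f. f \<in> E \<Longrightarrow> finite (T f)"
    "\<And>f. f \<in> E \<Longrightarrow> T f \<subseteq> {(f * x * e) * (e * y * f) | x y. True} - {0}"
    "\<And>f. f \<in> E \<Longrightarrow> (\<Sum>a\<in>T f. smul (R f a) a) = f"
proof -
  have "\<forall>f\<in>E. \<exists>t r. finite t \<and> t \<subseteq> {(f * x * e) * (e * y * f) | x y. True} - {0} \<and>
      (\<Sum>a\<in>t. smul (r a) a) = f"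
    using idempotent_decomposition[OF gen] by blast
  then obtain T where "\<forall>f\<in>E. \<exists>r. finite (T f) \<and>
      T f \<subseteq> {(f * x * e) * (e * y * f) | x y. True} - {0} \<and> (\<Sum>a\<in>T f. smul (r a) a) = f"
    by (rule bchoice[THEN exE])
  then obtain R where TR: "\<forall>f\<in>E. finite (T f) \<and>
      T f \<subseteq> {(f * x * e) * (e * y * f) | x y. True} - {0} \<and> (\<Sum>a\<in>T f. smul (R f a) a) = f"
    by (rule bchoice[THEN exE])
  then show thesis
    using that[of T R] by blast
qed

lemma decomposition_groups_disjoint:
  assumes T: "\<And>f. f \<in> E \<Longrightarrow> T f \<subseteq> {(f * x * e) * (e * y * f) | x y. True} - {0}"
    and fg: "f \<in> E" "g \<in> E" and s: "s \<in> T f" "s \<in> T g"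
  shows "f = g"
proof (rule ccontr)
  assume "f \<noteq> g"
  have absorb: "h * s = s" if h: "h \<in> E" and sh: "s \<in> T h" for h
  proof -
    obtain x y where "s = (h * x * e) * (e * y * h)"
      using T[OF h] sh by blast
    then show ?thesis
      using idem[OF h] by (simp add: mult.assoc idempotent_absorb)
  qed
  have "s = (f * g) * s"
    using absorb[OF fg(1) s(1)] absorb[OF fg(2) s(2)] by (metis mult.assoc)
  then have "s = 0"
    using orth[OF fg \<open>f \<noteq> g\<close>] by simp
  then show False
    using T[OF fg(1)] s(1) by blast
qed

lemma left_coord_system_exists:
  assumes gen: "generating smul e"
  shows "\<exists>(S::'a set) \<alpha> \<alpha>c. left_coord_system smul e S \<alpha> \<alpha>c"
proof -
  have ee: "e * e = e"
    using gen unfolding generating_def by simp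
  obtain T R where T: "\<And>f. f \<in> E \<Longrightarrow> finite (T f)"
    "\<And>f. f \<in> E \<Longrightarrow> T f \<subseteq> {(f * x * e) * (e * y * f) | x y. True} - {0}"
    and R: "\<And>f. f \<in> E \<Longrightarrow> (\<Sum>a\<in>T f. smul (R f a) a) = f"
    using idempotent_decompositions[OF gen] by blast
  define S where "S = (\<Union>f\<in>E. T f)"
  have "\<forall>s\<in>S. \<exists>f. f \<in> E \<and> s \<in> T f \<and> (\<exists>x y. s = (f * x * e) * (e * y * f))"
    using T(2) unfolding S_def by blast
  then obtain owner where owner: "\<forall>s\<in>S. owner s \<in> E \<and> s \<in> T (owner s) \<and>
      (\<exists>x y. s = (owner s * x * e) * (e * y * owner s))"
    by (rule bchoice[THEN exE])
  then obtain X where "\<forall>s\<in>S. \<exists>y. s = (owner s * X s * e) * (e * y * owner s)"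
    using bchoice[of S "\<lambda>s x. \<exists>y. s = (owner s * x * e) * (e * y * owner s)"] by blast
  then obtain Y where factor: "\<forall>s\<in>S. s = (owner s * X s * e) * (e * Y s * owner s)"
    by (rule bchoice[THEN exE])
  have owner_in: "owner s \<in> E" and in_own_group: "s \<in> T (owner s)" if "s \<in> S" for s
    using owner that by blast+
  have product: "(owner s * X s * e) * (e * Y s * owner s) = s" if "s \<in> S" for s
    by (rule sym) (use factor that in blast)
  have fibre: "{s\<in>S. owner s = f} = T f" if f: "f \<in> E" for f
  proof (intro equalityI subsetI)
    fix s assume s: "s \<in> T f"
    then have "s \<in> S"
      using f unfolding S_def by blast
    then have "owner s = f"
      using decomposition_groups_disjoint[OF T(2) owner_in f in_own_group s] by blast
    then show "s \<in> {s\<in>S. owner s = f}"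
      using \<open>s \<in> S\<close> by blast
  qed (use in_own_group in blast)
  have "left_coord_system smul e S (\<lambda>s b. smul (R (owner s) s) ((owner s * X s * e) * b))
      (\<lambda>s \<xi>. (e * Y s * owner s) * \<xi>)"
  proof (rule left_coord_system_of_factorizations[where owner = owner])
    show "owner s * (owner s * X s * e) = owner s * X s * e"
      "e * (e * Y s * owner s) = e * Y s * owner s"
      "e * Y s * owner s * owner s = e * Y s * owner s" if "s \<in> S" for s
      using idem[OF owner_in[OF that]] ee by (simp_all add: mult.assoc idempotent_absorb)
    show "finite {s\<in>S. owner s = f}" if "f \<in> E" for f
      using fibre T(1) that by simp
    show "(\<Sum>s\<in>{s\<in>S. owner s = f}. smul (R (owner s) s)
        ((owner s * X s * e) * (e * Y s * owner s))) = f" if f: "f \<in> E" for f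
    proof -
      have "(\<Sum>s\<in>{s\<in>S. owner s = f}. smul (R (owner s) s)
          ((owner s * X s * e) * (e * Y s * owner s))) = (\<Sum>s\<in>{s\<in>S. owner s = f}. smul (R f s) s)"
        using product by (intro sum.cong) auto
      also have "\<dots> = f"
        using R[OF f] fibre[OF f] by simp
      finally show ?thesis .
    qed
  qed (rule owner_in)
  then show ?thesis
    by blast
qed

end


theorem theorem6p5:
  fixes smul :: "complex \<Rightarrow> 'a::ring \<Rightarrow> 'a" and e :: 'a
  assumes "calg smul"
    and "strongly_AUF smul"
    and "generating smul e"
  shows "(\<exists>(I :: 'a set set) \<alpha> \<alpha>c. left_coord_system smul e I \<alpha> \<alpha>c) \<and>
         (\<forall>(N :: ('n, 'a) amod) (P :: ('p, 'a) amod). right_projective_wrt smul e (Ae_right smul e) N P)"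
proof -
  interpret complex_algebra smul
    using assms(1) by (rule complex_algebra.intro)
  obtain E where idem: "\<forall>f\<in>E. f * f = f" and orth: "\<forall>f\<in>E. \<forall>g\<in>E. f \<noteq> g \<longrightarrow> f * g = 0"
    and spanning: "UNIV \<subseteq> vs.span (\<Union>f\<in>E. \<Union>g\<in>E. corner f g)"
    using assms(2) unfolding strongly_AUF_def AUF_def by blast
  interpret AUF_algebra smul E
    by unfold_locales (use idem orth spanning in blast)+
  obtain S :: "'a set" and \<alpha> \<alpha>c where coords: "left_coord_system smul e S \<alpha> \<alpha>c"
    using left_coord_system_exists[OF assms(3)] by blast
  then interpret left_coordinates smul e S \<alpha> \<alpha>c
    using assms(3) by unfold_locales (simp_all add: generating_def)
  have "left_coord_system smul e ((\<lambda>s. {s}) ` S)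
      (\<lambda>j. \<alpha> (the_inv_into S (\<lambda>s. {s}) j)) (\<lambda>j. \<alpha>c (the_inv_into S (\<lambda>s. {s}) j))"
    by (rule left_coord_system_reindex[OF coords]) (simp add: inj_on_def)
  then show ?thesis
    using right_projective by blast
qed

end
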